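(* Fix $\eta>0$ and $u\in\mathbb{R}^d$. Let $C=\{1,\dots,m\}$ be a set of $m\ge1$ rollouts, each with verifier reward $r_i=1$, whose reward-weighted embeddings are all identical: $\tilde z_i=u$ for all $i\in C$. Define the team value on subsets $S\subseteq C$ by $v(\emptyset)=0$ and $v(S)=\log\det(I_{|S|}+\eta L_S)$, where $L_S=(\langle\tilde z_j,\tilde z_k\rangle)_{j,k\in S}$. Let $\phi_i$ denote the Shapley value of player $i$ in the cooperative game $(C,v)$, i.e. $$\phi_i=\sum_{S\subseteq C\setminus\{i\}}\frac{|S|!\,(m-|S|-1)!}{m!}\left[v(S\cup\{i\})-v(S)\right].$$ Then for every $i\in C$, $$\phi_i=\frac{1}{m}\log\left(1+\eta m\|u\|_2^2\right).$$
   Context: In the paper, $\tilde z_i=r_i\bar z_i$ where $r_i$ is the binary verifier reward and $\bar z_i$ the unit-normalized semantic embedding of a sampled response; "verifier-correct" means $r_i=1$. *)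

theory Defs
  imports "HOL-Analysis.Analysis" "Jordan_Normal_Form.Determinant"
begin

definition gram_sub :: "(nat \<Rightarrow> real ^ 'd) \<Rightarrow> nat set \<Rightarrow> real mat" where
  "gram_sub z S = (let xs = sorted_list_of_set S in
     mat (card S) (card S) (\<lambda>(j, k). inner (z (xs ! j)) (z (xs ! k))))"

definition team_value :: "real \<Rightarrow> (nat \<Rightarrow> real ^ 'd) \<Rightarrow> nat set \<Rightarrow> real" where
  "team_value \<eta> z S = (if S = {} then 0
     else ln (det (1\<^sub>m (card S) + \<eta> \<cdot>\<^sub>m gram_sub z S)))"

definition shapley :: "'p set \<Rightarrow> ('p set \<Rightarrow> real) \<Rightarrow> 'p \<Rightarrow> real" where
  "shapley C v i = (\<Sum>S\<in>Pow (C - {i}).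
     (fact (card S) * fact (card C - card S - 1) / fact (card C)) * (v (insert i S) - v S))"

end

theory Submission
  imports Defs
begin

(* For a coalition S of size k all reward-weighted embeddings equal u, so L_S = |u|^2 J_k and
   det (I + eta L_S) = 1 + eta k |u|^2. The game therefore depends only on coalition size, and for
   such a game the Shapley weights of the coalitions of each size k < m sum to 1/m, so phi_i
   telescopes to (v(C) - v({})) / m. *)

lemma det_one_plus_const_mat:
  fixes b :: "'a::comm_ring_1"
  shows "det (1\<^sub>m k + mat k k (\<lambda>_. b)) = 1 + of_nat k * b"
proof -
  define M where "M = 1\<^sub>m k + mat k k (\<lambda>_. b)"
  \<comment> \<open>Right multiplication by B adds all columns to the first one;
    left multiplication by B adds the first row to all others.\<close>
  define B where "B = mat k k (\<lambda>(i, j). if i = j \<or> j = 0 then 1 else (0::'a))"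
  define T where "T = mat k k (\<lambda>(i, j). if i = 0 then (if j = 0 then 1 + of_nat k * b else b)
      else if i = j then 1 else (0::'a))"
  have carrier: "M \<in> carrier_mat k k" "B \<in> carrier_mat k k" "T \<in> carrier_mat k k"
    by (auto simp: M_def B_def T_def)
  have "M * B = B * T"
  proof (rule eq_matI)
    fix i j assume "i < dim_row (B * T)" "j < dim_col (B * T)"
    then have ij: "i < k" "j < k" by (auto simp: B_def T_def)
    have "(M * B) $$ (i, j) = (\<Sum>l<k. M $$ (i, l) * B $$ (l, j))"
      using ij carrier by (simp add: scalar_prod_def lessThan_atLeast0)
    also have "\<dots> = (if j = 0 then (\<Sum>l<k. M $$ (i, l)) else M $$ (i, j))"
      using ij by (auto simp: B_def if_distrib cong: if_cong)
    also have "\<dots> = T $$ (i, j) + (if i = 0 then 0 else T $$ (0, j))"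
      using ij by (auto simp: M_def T_def sum.distrib)
    also have "\<dots> = (\<Sum>l<k. (if l = i then T $$ (l, j) else 0)
        + (if l = 0 \<and> i \<noteq> 0 then T $$ (l, j) else 0))"
      using ij by (simp add: sum.distrib)
    also have "\<dots> = (\<Sum>l<k. B $$ (i, l) * T $$ (l, j))"
      using ij by (intro sum.cong) (auto simp: B_def)
    also have "\<dots> = (B * T) $$ (i, j)"
      using ij carrier by (simp add: scalar_prod_def lessThan_atLeast0)
    finally show "(M * B) $$ (i, j) = (B * T) $$ (i, j)" .
  qed (use carrier in auto)
  moreover have "det B = 1"
    by (subst det_lower_triangular[of k]) (auto simp: B_def prod_list_diag_prod)
  moreover have "det T = (\<Prod>i = 0..<k. T $$ (i, i))"
    by (subst det_upper_triangular[of _ k])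
      (auto simp: T_def upper_triangular_def prod_list_diag_prod)
  moreover have "(\<Prod>i = 0..<k. T $$ (i, i)) = 1 + of_nat k * b"
  proof -
    have "T $$ (i, i) = (if i = 0 then 1 + of_nat k * b else 1)" if "i < k" for i
      using that by (simp add: T_def)
    then show ?thesis by simp
  qed
  ultimately show ?thesis
    using det_mult[of M k B] det_mult[of B k T] carrier by (simp add: M_def)
qed

lemma sum_Pow_by_card:
  fixes g :: "nat \<Rightarrow> 'a::comm_semiring_1"
  assumes "finite A"
  shows "(\<Sum>S\<in>Pow A. g (card S)) = (\<Sum>k\<le>card A. of_nat (card A choose k) * g k)"
proof -
  have "(\<Sum>S\<in>Pow A. g (card S)) = (\<Sum>k\<le>card A. \<Sum>S\<in>{S \<in> Pow A. card S = k}. g (card S))"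
    using assms by (intro sum.group[symmetric]) (auto intro: card_mono)
  also have "\<dots> = (\<Sum>k\<le>card A. of_nat (card A choose k) * g k)"
  proof (intro sum.cong refl)
    fix k
    have "{S \<in> Pow A. card S = k} = {S. S \<subseteq> A \<and> card S = k}" by auto
    then show "(\<Sum>S\<in>{S \<in> Pow A. card S = k}. g (card S)) = of_nat (card A choose k) * g k"
      using n_subsets[OF assms, of k] by simp
  qed
  finally show ?thesis .
qed

lemma shapley_weight_binomial:
  assumes "k < n"
  shows "real (n - 1 choose k) * (fact k * fact (n - k - 1) / fact n) = 1 / real n"
proof -
  have "real (n - 1 choose k) = fact (n - 1) / (fact k * fact (n - 1 - k))"
    using assms by (simp add: binomial_fact)
  moreover have "(fact n :: real) = real n * fact (n - 1)"
    using assms fact_reduce[of n] by simp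
  moreover have "n - k - 1 = n - 1 - k" by simp
  ultimately show ?thesis using assms by simp
qed

lemma shapley_card_game:
  fixes v :: "'p set \<Rightarrow> real" and f :: "nat \<Rightarrow> real"
  assumes "finite C" and "i \<in> C" and "\<And>S. S \<subseteq> C \<Longrightarrow> v S = f (card S)"
  shows "shapley C v i = (f (card C) - f 0) / real (card C)"
proof -
  define n where "n = card C"
  have n: "n \<ge> 1" "card (C - {i}) = n - 1"
    using assms(1,2) by (auto simp: n_def Suc_le_eq card_gt_0_iff)
  have "shapley C v i = (\<Sum>S\<in>Pow (C - {i}).
      fact (card S) * fact (n - card S - 1) / fact n * (f (Suc (card S)) - f (card S)))"
    unfolding shapley_def n_def
  proof (intro sum.cong refl)
    fix S assume S: "S \<in> Pow (C - {i})"
    then have "S \<subseteq> C" "insert i S \<subseteq> C" "i \<notin> S" "finite S"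
      using assms(1,2) by (auto intro: finite_subset)
    then have "v (insert i S) = f (Suc (card S))" and "v S = f (card S)"
      using assms(3) by simp_all
    then show "fact (card S) * fact (card C - card S - 1) / fact (card C) * (v (insert i S) - v S)
        = fact (card S) * fact (card C - card S - 1) / fact (card C) * (f (Suc (card S)) - f (card S))"
      by simp
  qed
  also have "\<dots> = (\<Sum>k<n. real (n - 1 choose k)
      * (fact k * fact (n - k - 1) / fact n) * (f (Suc k) - f k))"
    using sum_Pow_by_card[of "C - {i}" "\<lambda>k. fact k * fact (n - k - 1) / fact n * (f (Suc k) - f k)"]
      assms(1) n
    by (simp add: atMost_atLeast0 lessThan_atLeast0 atLeastLessThanSuc_atLeastAtMost[symmetric]
        mult.assoc)
  also have "\<dots> = (\<Sum>k<n. (f (Suc k) - f k) / real n)"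
    by (intro sum.cong refl) (subst shapley_weight_binomial, simp_all)
  also have "\<dots> = (f n - f 0) / real n"
    by (simp add: sum_divide_distrib[symmetric] sum_lessThan_telescope)
  finally show ?thesis by (simp add: n_def)
qed

lemma gram_sub_const:
  assumes "finite S" and "\<And>j. j \<in> S \<Longrightarrow> z j = u"
  shows "gram_sub z S = mat (card S) (card S) (\<lambda>_. inner u u)"
proof -
  have "z (sorted_list_of_set S ! j) = u" if "j < card S" for j
    using assms that by (metis nth_mem set_sorted_list_of_set length_sorted_list_of_set)
  then show ?thesis
    unfolding gram_sub_def Let_def by (intro eq_matI) auto
qed

lemma team_value_const:
  fixes z :: "nat \<Rightarrow> real ^ 'd"
  assumes "finite S" and "\<And>j. j \<in> S \<Longrightarrow> z j = u"
  shows "team_value \<eta> z S = ln (1 + \<eta> * real (card S) * (norm u)\<^sup>2)"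
proof (cases "S = {}")
  case False
  have "\<eta> \<cdot>\<^sub>m gram_sub z S = mat (card S) (card S) (\<lambda>_. \<eta> * (norm u)\<^sup>2)"
    using assms by (auto simp: gram_sub_const power2_norm_eq_inner)
  then show ?thesis
    using False by (simp add: team_value_def det_one_plus_const_mat mult.assoc mult.left_commute)
qed (simp add: team_value_def)

theorem theorem2:
  fixes \<eta> :: real and u :: "real ^ 'd" and m :: nat
    and r :: "nat \<Rightarrow> real" and zbar :: "nat \<Rightarrow> real ^ 'd" and i :: nat
  assumes "\<eta> > 0" and "m \<ge> 1"
    and "\<forall>j\<in>{1..m}. r j = 1"
    and "\<forall>j\<in>{1..m}. r j *\<^sub>R zbar j = u"
    and "i \<in> {1..m}"
  shows "shapley {1..m} (team_value \<eta> (\<lambda>j. r j *\<^sub>R zbar j)) i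
           = (1 / real m) * ln (1 + \<eta> * real m * (norm u)\<^sup>2)"
proof -
  let ?f = "\<lambda>k. ln (1 + \<eta> * real k * (norm u)\<^sup>2)"
  have "team_value \<eta> (\<lambda>j. r j *\<^sub>R zbar j) S = ?f (card S)" if "S \<subseteq> {1..m}" for S
    using that assms(4) by (intro team_value_const) (auto intro: finite_subset)
  then have "shapley {1..m} (team_value \<eta> (\<lambda>j. r j *\<^sub>R zbar j)) i = (?f m - ?f 0) / real m"
    using shapley_card_game[of "{1..m}" i] assms(5) by simp
  then show ?thesis by simp
qed

end
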